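(* Define rooted trees $L(k)$, $k\ge 0$, recursively: $L(0)$ is a single vertex (its root); for $k\ge 0$, $L(k+1)$ consists of a root $u$ with three children $v_1,v_2,v_3$, where each $v_i$ has exactly one child, and that child is the root of a copy of $L(k)$ (the three copies being disjoint). Then for every $k\ge 0$, $\mathrm{lmw}(L(k))=\mathrm{lmw}(L(k)^2)=k$.
   Context: All graphs are finite and simple. For a graph $G$, its square $G^2$ is the graph on $V(G)$ in which two distinct vertices are adjacent iff their distance in $G$ is at most $2$. For disjoint $S,T\subseteq V(G)$, $G[S,T]$ denotes the bipartite graph on $S\cup T$ whose edges are exactly the edges of $G$ with one endpoint in $S$ and the other in $T$. $\mathrm{mim}(H)$ is the maximum number of edges in an induced matching of $H$. A linear layout of an $n$-vertex graph $G$ is a bijection $\sigma:V(G)\to\{1,\dots,n\}$; write $v_i=\sigma^{-1}(i)$ and $V_i^\sigma=\{v_1,\dots,v_i\}$, $\overline{V_i^\sigma}=V(G)\setminus V_i^\sigma$. The MIM-width of $G$ under $\sigma$ is $\mathrm{mw}(\sigma,G)=\max_{1\le i<n}\mathrm{mim}(G[V_i^\sigma,\overline{V_i^\sigma}])$ (equal to $0$ if $n\le 1$). The linear MIM-width $\mathrm{lmw}(G)$ is the minimum of $\mathrm{mw}(\sigma,G)$ over all linear layouts $\sigma$ of $G$. *)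

theory Defs
  imports Main
begin

definition simple_graph :: "'a set \<Rightarrow> 'a set set \<Rightarrow> bool" where
  "simple_graph V E \<longleftrightarrow> finite V \<and> (\<forall>e\<in>E. \<exists>u v. u \<in> V \<and> v \<in> V \<and> u \<noteq> v \<and> e = {u, v})"

definition graph_square :: "'a set \<Rightarrow> 'a set set \<Rightarrow> 'a set set" where
  "graph_square V E = {{u, v} | u v. u \<in> V \<and> v \<in> V \<and> u \<noteq> v \<and>
      ({u, v} \<in> E \<or> (\<exists>w\<in>V. {u, w} \<in> E \<and> {w, v} \<in> E))}"

definition bip_edges :: "'a set set \<Rightarrow> 'a set \<Rightarrow> 'a set \<Rightarrow> 'a set set" where
  "bip_edges E S T = {e \<in> E. \<exists>s t. s \<in> S \<and> t \<in> T \<and> e = {s, t}}"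

definition induced_matching :: "'a set set \<Rightarrow> 'a set set \<Rightarrow> bool" where
  "induced_matching F M \<longleftrightarrow> M \<subseteq> F \<and>
     (\<forall>e\<in>M. \<forall>f\<in>M. e \<noteq> f \<longrightarrow> e \<inter> f = {} \<and> \<not> (\<exists>g\<in>F. g \<inter> e \<noteq> {} \<and> g \<inter> f \<noteq> {}))"

definition mim :: "'a set set \<Rightarrow> nat" where
  "mim F = Max (card ` {M. induced_matching F M})"

definition prefix_set :: "'a set \<Rightarrow> ('a \<Rightarrow> nat) \<Rightarrow> nat \<Rightarrow> 'a set" where
  "prefix_set V \<sigma> i = {v \<in> V. \<sigma> v \<le> i}"

definition linear_layout :: "'a set \<Rightarrow> ('a \<Rightarrow> nat) \<Rightarrow> bool" where
  "linear_layout V \<sigma> \<longleftrightarrow> bij_betw \<sigma> V {1..card V}"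

definition mim_width :: "'a set \<Rightarrow> 'a set set \<Rightarrow> ('a \<Rightarrow> nat) \<Rightarrow> nat" where
  "mim_width V E \<sigma> = Max (insert 0
     ((\<lambda>i. mim (bip_edges E (prefix_set V \<sigma> i) (V - prefix_set V \<sigma> i))) ` {1..<card V}))"

definition lmw :: "'a set \<Rightarrow> 'a set set \<Rightarrow> nat" where
  "lmw V E = Min {mim_width V E \<sigma> | \<sigma>. linear_layout V \<sigma>}"

text \<open>Vertices are encoded as lists (paths from the root [] );
L(k+1) has root [], children [i] (i = 0,1,2), each [i] has the single child [i,0],
which is the root of a copy of L(k) (vertices [i,0] @ w).\<close>
fun L_verts :: "nat \<Rightarrow> nat list set" where
  "L_verts 0 = {[]}"
| "L_verts (Suc k) = insert []
     (\<Union>i\<in>{0,1,2}. {[i], [i,0]} \<union> (\<lambda>w. [i,0] @ w) ` L_verts k)"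

definition L_edges :: "nat \<Rightarrow> nat list set set" where
  "L_edges k = {{x, x @ [c]} | x c. x \<in> L_verts k \<and> x @ [c] \<in> L_verts k}"

end

theory Submission
  imports Defs
begin

text \<open>
  Lower bound, by induction on \<open>k\<close>: given a layout of \<open>L(k+1)\<close>, each of the three copies of
  \<open>L(k)\<close> has a cut of its induced layout carrying an induced matching of size \<open>k\<close>. Cut
  \<open>L(k+1)\<close> at the median of these three positions. The matching of the median copy survives,
  the earlier copy has a vertex before the cut and the later copy one after it, so the path
  between them through the top of the tree crosses the cut in an edge that no edge connects to
  the median copy; it extends the matching to size \<open>k+1\<close>.

  Upper bound: lay out \<open>L(k+1)\<close> as root, copy 0, \<open>[0]\<close>, copy 1, \<open>[1]\<close>, \<open>[2]\<close>, copy 2. A cut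
  then splits at most one copy, which contributes at most \<open>k\<close> edges by induction, and any two
  crossing edges touching the four top vertices share an endpoint or are joined by an edge, so
  they contribute at most one more.

  Both arguments only use a few properties shared by \<open>L(k)\<close> and its square.
\<close>

section \<open>Induced matchings and cuts\<close>

lemma induced_matchingD:
  "induced_matching F M \<Longrightarrow> M \<subseteq> F"
  "induced_matching F M \<Longrightarrow> e \<in> M \<Longrightarrow> f \<in> M \<Longrightarrow> e \<noteq> f \<Longrightarrow> e \<inter> f = {}"
  "induced_matching F M \<Longrightarrow> e \<in> M \<Longrightarrow> f \<in> M \<Longrightarrow> e \<noteq> f \<Longrightarrow> g \<in> F \<Longrightarrow> g \<inter> e \<noteq> {} \<Longrightarrow> g \<inter> f = {}"
  unfolding induced_matching_def by blast+

lemma induced_matching_empty: "induced_matching F {}"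
  unfolding induced_matching_def by simp

lemma induced_matching_subset: "induced_matching F M \<Longrightarrow> M' \<subseteq> M \<Longrightarrow> induced_matching F M'"
  unfolding induced_matching_def by (meson order_trans subsetD)

lemma induced_matching_insert:
  assumes "induced_matching F M" and "e \<in> F"
    and "\<And>f. f \<in> M \<Longrightarrow> e \<noteq> f \<and> e \<inter> f = {} \<and> (\<forall>g\<in>F. g \<inter> e \<noteq> {} \<longrightarrow> g \<inter> f = {})"
  shows "induced_matching F (insert e M)"
  unfolding induced_matching_def
proof (intro conjI ballI impI)
  show "insert e M \<subseteq> F" using assms(1,2) induced_matchingD(1) by blast
next
  fix x y assume "x \<in> insert e M" "y \<in> insert e M" "x \<noteq> y"
  then consider "x = e" "y \<in> M" | "y = e" "x \<in> M" | "x \<in> M" "y \<in> M" by blast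
  then have "x \<inter> y = {} \<and> (\<forall>g\<in>F. g \<inter> x \<noteq> {} \<longrightarrow> g \<inter> y = {})"
  proof cases
    case 1 then show ?thesis using assms(3)[of y] by simp
  next
    case 2 then show ?thesis using assms(3)[of x] by (auto simp: Int_commute)
  next
    case 3 then show ?thesis using induced_matchingD(2,3)[OF assms(1)] \<open>x \<noteq> y\<close> by simp
  qed
  then show "x \<inter> y = {}" "\<not> (\<exists>g\<in>F. g \<inter> x \<noteq> {} \<and> g \<inter> y \<noteq> {})" by blast+
qed

lemma induced_matching_singleton: "e \<in> F \<Longrightarrow> induced_matching F {e}"
  by (rule induced_matching_insert[OF induced_matching_empty]) simp_all

lemma induced_matching_insert_far:
  assumes M: "induced_matching F M" and e: "e \<in> F" "e \<noteq> {}" and "F \<subseteq> G"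
    and MC: "\<Union>M \<subseteq> C" and far: "\<forall>g\<in>G. g \<inter> e \<noteq> {} \<longrightarrow> g \<inter> C = {}"
  shows "induced_matching F (insert e M)" and "e \<notin> M"
proof -
  have "e \<inter> C = {}" using far e \<open>F \<subseteq> G\<close> by blast
  then show "e \<notin> M" using MC e(2) by blast
  show "induced_matching F (insert e M)"
  proof (rule induced_matching_insert[OF M e(1)])
    fix f assume "f \<in> M"
    then have "f \<subseteq> C" using MC by blast
    then show "e \<noteq> f \<and> e \<inter> f = {} \<and> (\<forall>g\<in>F. g \<inter> e \<noteq> {} \<longrightarrow> g \<inter> f = {})"
      using \<open>e \<inter> C = {}\<close> \<open>f \<in> M\<close> \<open>e \<notin> M\<close> far \<open>F \<subseteq> G\<close> by blast
  qed
qed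

lemma finite_induced_matching: "finite F \<Longrightarrow> induced_matching F M \<Longrightarrow> finite M"
  using induced_matchingD(1) finite_subset by blast

lemma finite_induced_matchings: "finite F \<Longrightarrow> finite {M. induced_matching F M}"
  by (rule finite_subset[of _ "Pow F"]) (auto dest: induced_matchingD(1))

lemma card_le_mim: "finite F \<Longrightarrow> induced_matching F M \<Longrightarrow> card M \<le> mim F"
  unfolding mim_def by (rule Max_ge) (simp_all add: finite_induced_matchings)

lemma mim_leI: "finite F \<Longrightarrow> (\<And>M. induced_matching F M \<Longrightarrow> card M \<le> k) \<Longrightarrow> mim F \<le> k"
  unfolding mim_def
  by (rule Max.boundedI) (use finite_induced_matchings induced_matching_empty in auto)

lemma mim_le_card: "finite F \<Longrightarrow> mim F \<le> card F"
  by (rule mim_leI) (auto intro: card_mono dest: induced_matchingD(1))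

lemma mim_empty[simp]: "mim {} = 0"
  using mim_le_card[of "{}"] by simp

lemma induced_matching_bip_edges_unlinked:
  assumes M: "induced_matching (bip_edges F S T) M"
    and "{s,t} \<in> M" "{s',t'} \<in> M" "{s,t} \<noteq> {s',t'}" "s \<in> S" "t \<in> T" "s' \<in> S" "t' \<in> T"
  shows "{s,t'} \<notin> F"
proof
  assume "{s,t'} \<in> F"
  then have "{s,t'} \<in> bip_edges F S T" using assms unfolding bip_edges_def by blast
  from induced_matchingD(3)[OF M assms(2-4) this] show False by blast
qed

lemma doubleton_image_in_bip_edges_iff:
  assumes edge: "{f a, f b} \<in> F' \<longleftrightarrow> {a,b} \<in> F"
    and S: "\<And>w. w \<in> {a,b} \<Longrightarrow> f w \<in> S' \<longleftrightarrow> w \<in> S"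
    and T: "\<And>w. w \<in> {a,b} \<Longrightarrow> f w \<in> T' \<longleftrightarrow> w \<in> T"
    and "S' \<inter> T' = {}"
  shows "{f a, f b} \<in> bip_edges F' S' T' \<longleftrightarrow> {a,b} \<in> bip_edges F S T"
proof -
  have "(\<exists>s t. s \<in> S' \<and> t \<in> T' \<and> {f a, f b} = {s,t}) \<longleftrightarrow>
      f a \<in> S' \<and> f b \<in> T' \<or> f b \<in> S' \<and> f a \<in> T'"
    using \<open>S' \<inter> T' = {}\<close> by (auto simp: doubleton_eq_iff)
  also have "\<dots> \<longleftrightarrow> a \<in> S \<and> b \<in> T \<or> b \<in> S \<and> a \<in> T" using S T by simp
  also have "\<dots> \<longleftrightarrow> (\<exists>s t. s \<in> S \<and> t \<in> T \<and> {a,b} = {s,t})" by (auto simp: doubleton_eq_iff)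
  finally show ?thesis unfolding bip_edges_def using edge by blast
qed

lemma induced_matching_bip_edges_image:
  assumes inj: "inj_on f W"
    and edge: "\<And>u v. u \<in> W \<Longrightarrow> v \<in> W \<Longrightarrow> {f u, f v} \<in> F' \<longleftrightarrow> {u,v} \<in> F"
    and S: "\<And>w. w \<in> W \<Longrightarrow> f w \<in> S' \<longleftrightarrow> w \<in> S"
    and T: "\<And>w. w \<in> W \<Longrightarrow> f w \<in> T' \<longleftrightarrow> w \<in> T"
    and "S' \<inter> T' = {}"
    and M: "induced_matching (bip_edges F S T) M" and MW: "\<Union>M \<subseteq> W"
  shows "induced_matching (bip_edges F' S' T') ((`) f ` M)" and "card ((`) f ` M) = card M"
proof -
  have sub: "e \<subseteq> W" if "e \<in> M" for e using MW that by blast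
  have pair_iff: "{f a, f b} \<in> bip_edges F' S' T' \<longleftrightarrow> {a,b} \<in> bip_edges F S T" if "a \<in> W" "b \<in> W" for a b
    using that by (intro doubleton_image_in_bip_edges_iff edge S T \<open>S' \<inter> T' = {}\<close>) auto
  show "card ((`) f ` M) = card M"
    by (rule card_image, rule inj_onI) (metis sub inj inj_on_image_eq_iff)
  show "induced_matching (bip_edges F' S' T') ((`) f ` M)"
    unfolding induced_matching_def
  proof (intro conjI ballI impI)
    show "(`) f ` M \<subseteq> bip_edges F' S' T'"
    proof
      fix e' assume "e' \<in> (`) f ` M"
      then obtain e s t where e: "e \<in> M" "e' = f ` e" "e = {s,t}"
        using induced_matchingD(1)[OF M] unfolding bip_edges_def by blast
      then have "s \<in> W" "t \<in> W" "e' = {f s, f t}" using sub by auto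
      then show "e' \<in> bip_edges F' S' T'"
        using pair_iff induced_matchingD(1)[OF M] e by auto
    qed
  next
    fix e' h' assume "e' \<in> (`) f ` M" "h' \<in> (`) f ` M" "e' \<noteq> h'"
    then obtain e h where eh: "e \<in> M" "h \<in> M" "e' = f ` e" "h' = f ` h" "e \<noteq> h" by blast
    have dis: "e \<inter> h = {}" using induced_matchingD(2)[OF M eh(1,2,5)] .
    show "e' \<inter> h' = {}"
      using dis eh sub inj by (metis image_empty inj_on_image_Int)
    show "\<not> (\<exists>g'\<in>bip_edges F' S' T'. g' \<inter> e' \<noteq> {} \<and> g' \<inter> h' \<noteq> {})"
    proof
      assume "\<exists>g'\<in>bip_edges F' S' T'. g' \<inter> e' \<noteq> {} \<and> g' \<inter> h' \<noteq> {}"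
      then obtain g' a b where g': "g' \<in> bip_edges F' S' T'" and ab: "a \<in> e" "b \<in> h" "f a \<in> g'" "f b \<in> g'"
        using eh by blast
      have W: "a \<in> W" "b \<in> W" using ab sub eh by auto
      have "f a \<noteq> f b" using ab dis W inj by (metis disjoint_iff inj_on_contraD)
      moreover obtain x y where "g' = {x,y}" using g' unfolding bip_edges_def by blast
      ultimately have "g' = {f a, f b}" using ab by auto
      then have "{a,b} \<in> bip_edges F S T" using pair_iff[OF W] g' by simp
      then show False using induced_matchingD(3)[OF M eh(1,2,5)] ab by blast
    qed
  qed
qed

definition cut_edges :: "'a set set \<Rightarrow> 'a set \<Rightarrow> ('a \<Rightarrow> nat) \<Rightarrow> nat \<Rightarrow> 'a set set" where
  "cut_edges E V \<sigma> p = bip_edges E (prefix_set V \<sigma> p) (V - prefix_set V \<sigma> p)"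

lemma mem_cut_edges:
  "e \<in> cut_edges E V \<sigma> p \<longleftrightarrow> e \<in> E \<and> (\<exists>s t. s \<in> V \<and> t \<in> V \<and> \<sigma> s \<le> p \<and> \<not> \<sigma> t \<le> p \<and> e = {s,t})"
  unfolding cut_edges_def bip_edges_def prefix_set_def by blast

lemma doubleton_in_cut_edges:
  "{u,v} \<in> E \<Longrightarrow> u \<in> V \<Longrightarrow> v \<in> V \<Longrightarrow> (\<sigma> u \<le> p) \<noteq> (\<sigma> v \<le> p) \<Longrightarrow> {u,v} \<in> cut_edges E V \<sigma> p"
  unfolding mem_cut_edges by (metis insert_commute)

lemma Union_cut_edges_subset: "\<Union>(cut_edges E V \<sigma> p) \<subseteq> V"
  by (auto simp: mem_cut_edges)

lemma induced_matching_cut_edgesD: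
  assumes "induced_matching (cut_edges E V \<sigma> p) M" and "e \<in> M"
  shows "\<exists>s t. s \<in> V \<and> t \<in> V \<and> \<sigma> s \<le> p \<and> \<not> \<sigma> t \<le> p \<and> e = {s,t} \<and> e \<in> E"
  using subsetD[OF induced_matchingD(1)[OF assms(1)] assms(2)] by (auto simp: mem_cut_edges)

lemma induced_matching_cut_edges_sides:
  assumes "induced_matching (cut_edges E V \<sigma> p) M" and "M \<noteq> {}"
  shows "\<exists>s\<in>V. \<sigma> s \<le> p" and "\<exists>t\<in>V. \<not> \<sigma> t \<le> p"
  using assms induced_matching_cut_edgesD[OF assms(1)] by blast+

lemma cut_edges_subset: "cut_edges E V \<sigma> p \<subseteq> E"
  by (auto simp: mem_cut_edges)

lemma cut_edges_mono: "E \<subseteq> E' \<Longrightarrow> cut_edges E V \<sigma> p \<subseteq> cut_edges E' V \<sigma> p"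
  by (auto simp: mem_cut_edges)

lemma cut_edges_shift:
  assumes "\<And>v. v \<in> V \<Longrightarrow> 0 < \<sigma> v"
  shows "cut_edges E V (\<lambda>v. d + \<sigma> v) p = cut_edges E V \<sigma> (p - d)"
proof -
  have "prefix_set V (\<lambda>v. d + \<sigma> v) p = prefix_set V \<sigma> (p - d)"
    using assms unfolding prefix_set_def by force
  then show ?thesis unfolding cut_edges_def by simp
qed

lemma mim_width_leI: "(\<And>p. mim (cut_edges E V \<sigma> p) \<le> k) \<Longrightarrow> mim_width V E \<sigma> \<le> k"
  unfolding mim_width_def cut_edges_def by (auto intro: Max.boundedI)

text \<open>Cuts outside \<open>1..<card V\<close> are empty, so the width bounds every cut.\<close>

lemma mim_cut_le_mim_width:
  assumes "linear_layout V \<sigma>"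
  shows "mim (cut_edges E V \<sigma> p) \<le> mim_width V E \<sigma>"
proof (cases "p \<in> {1..<card V}")
  case True
  then show ?thesis unfolding mim_width_def cut_edges_def by (intro Max_ge) auto
next
  case False
  have "\<sigma> v \<in> {1..card V}" if "v \<in> V" for v
    using assms that unfolding linear_layout_def bij_betw_def by blast
  then have "cut_edges E V \<sigma> p = {}" using False by (fastforce simp: mem_cut_edges)
  then show ?thesis by simp
qed

lemma mim_width_le_card:
  assumes "finite E" shows "mim_width V E \<sigma> \<le> card E"
proof (rule mim_width_leI)
  fix p
  have "finite (cut_edges E V \<sigma> p)" by (rule finite_subset[OF cut_edges_subset assms])
  then have "mim (cut_edges E V \<sigma> p) \<le> card (cut_edges E V \<sigma> p)" by (rule mim_le_card)
  also have "\<dots> \<le> card E" by (rule card_mono[OF assms cut_edges_subset])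
  finally show "mim (cut_edges E V \<sigma> p) \<le> card E" .
qed

lemma lmw_eqI:
  assumes "finite E" and "linear_layout V \<sigma>" and "mim_width V E \<sigma> \<le> k"
    and "\<And>\<tau>. linear_layout V \<tau> \<Longrightarrow> k \<le> mim_width V E \<tau>"
  shows "lmw V E = k"
  unfolding lmw_def
proof (rule Min_eqI)
  show "finite {mim_width V E \<tau> |\<tau>. linear_layout V \<tau>}"
    by (rule finite_subset[of _ "{..card E}"]) (auto simp: mim_width_le_card[OF assms(1)])
  have "mim_width V E \<sigma> = k" using assms(3) assms(4)[OF assms(2)] by simp
  then show "k \<in> {mim_width V E \<tau> |\<tau>. linear_layout V \<tau>}" using assms(2) by auto
next
  fix w assume "w \<in> {mim_width V E \<tau> |\<tau>. linear_layout V \<tau>}"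
  then show "k \<le> w" using assms(4) by auto
qed

section \<open>The trees \<open>L(k)\<close>\<close>

lemma Nil_in_L_verts[simp]: "[] \<in> L_verts k"
  by (cases k) simp_all

lemma nat_le_2_iff: "(i::nat) \<le> 2 \<longleftrightarrow> i = 0 \<or> i = 1 \<or> i = 2"
  by auto

lemma mem_L_verts_Suc:
  "v \<in> L_verts (Suc k) \<longleftrightarrow> v = [] \<or> (\<exists>i\<le>2. v = [i]) \<or> (\<exists>i\<le>2. \<exists>w\<in>L_verts k. v = i#0#w)"
  by (auto simp: nat_le_2_iff)

declare L_verts.simps(2)[simp del]

lemma Cons_Cons_in_L_verts_Suc[simp]: "i#0#w \<in> L_verts (Suc k) \<longleftrightarrow> i \<le> 2 \<and> w \<in> L_verts k"
  by (auto simp: mem_L_verts_Suc)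

lemma singleton_in_L_verts_Suc[simp]: "[i] \<in> L_verts (Suc k) \<longleftrightarrow> i \<le> 2"
  by (auto simp: mem_L_verts_Suc)

lemma doubleton_in_L_verts_Suc[simp]: "[i,c] \<in> L_verts (Suc k) \<longleftrightarrow> i \<le> 2 \<and> c = 0"
  by (auto simp: mem_L_verts_Suc)

lemma finite_L_verts[simp]: "finite (L_verts k)"
  by (induction k) (auto simp: L_verts.simps(2))

lemma card_L_verts_Suc: "card (L_verts (Suc k)) = 3 * card (L_verts k) + 4"
proof -
  let ?n = "card (L_verts k)" and ?C = "\<lambda>i. ((@) [i,0]) ` L_verts k"
  have "L_verts (Suc k) = {[],[0],[1],[2]} \<union> ?C 0 \<union> ?C 1 \<union> ?C 2"
    by (rule set_eqI, simp only: mem_L_verts_Suc Un_iff insert_iff image_iff) (auto simp: nat_le_2_iff)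
  also have "card \<dots> = card ({[],[0],[1],[2]} \<union> ?C 0 \<union> ?C 1) + ?n"
    by (subst card_Un_disjoint) (auto simp: card_image inj_on_def simp del: Cons_Cons_in_L_verts_Suc doubleton_in_L_verts_Suc singleton_in_L_verts_Suc)
  also have "\<dots> = card ({[],[0],[1],[2]} \<union> ?C 0) + ?n + ?n"
    by (subst card_Un_disjoint) (auto simp: card_image inj_on_def simp del: Cons_Cons_in_L_verts_Suc doubleton_in_L_verts_Suc singleton_in_L_verts_Suc)
  also have "\<dots> = 4 + ?n + ?n + ?n"
    by (subst card_Un_disjoint) (auto simp: card_image inj_on_def simp del: Cons_Cons_in_L_verts_Suc doubleton_in_L_verts_Suc singleton_in_L_verts_Suc)
  finally show ?thesis by simp
qed

lemma card_L_verts_pos: "0 < card (L_verts k)"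
  using Nil_in_L_verts finite_L_verts card_gt_0_iff by blast

lemma take_in_L_verts: "v \<in> L_verts n \<Longrightarrow> take j v \<in> L_verts n"
proof (induction n arbitrary: v j)
  case (Suc k)
  then consider "v = []" | i where "i \<le> 2" "v = [i]" | i w where "i \<le> 2" "w \<in> L_verts k" "v = i#0#w"
    unfolding mem_L_verts_Suc by blast
  then show ?case
  proof cases
    case (2 i)
    then show ?thesis by (cases j) simp_all
  next
    case (3 i w)
    show ?thesis
    proof (cases "j \<le> 2")
      case True
      then have "j = 0 \<or> j = 1 \<or> j = 2" by auto
      then show ?thesis using 3 by auto
    next
      case False
      then have "take j v = i#0#take (j - 2) w" using 3 by (simp add: take_Cons' numeral_2_eq_2)
      then show ?thesis using 3 Suc.IH by simp
    qed
  qed simp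
qed simp

lemma butlast_in_L_verts: "v \<in> L_verts n \<Longrightarrow> butlast v \<in> L_verts n"
  by (simp add: butlast_conv_take take_in_L_verts)

abbreviation L_copy :: "nat \<Rightarrow> nat \<Rightarrow> nat list set" where
  "L_copy i k \<equiv> (\<lambda>w. i#0#w) ` L_verts k"

definition L_adj :: "nat \<Rightarrow> nat list \<Rightarrow> nat list \<Rightarrow> bool" where
  "L_adj n u v \<longleftrightarrow> u \<in> L_verts n \<and> v \<in> L_verts n \<and> (\<exists>c. v = u @ [c] \<or> u = v @ [c])"

lemma L_adj_sym: "L_adj n u v \<longleftrightarrow> L_adj n v u"
  unfolding L_adj_def by blast

lemma L_adj_neq: "L_adj n u v \<Longrightarrow> u \<noteq> v"
  unfolding L_adj_def by auto

lemma L_adjD: "L_adj n u v \<Longrightarrow> u \<in> L_verts n \<and> v \<in> L_verts n"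
  unfolding L_adj_def by blast

lemma doubleton_in_L_edges_iff: "{u,v} \<in> L_edges n \<longleftrightarrow> L_adj n u v"
proof
  assume "{u,v} \<in> L_edges n"
  then obtain x c where "{u,v} = {x, x @ [c]}" "x \<in> L_verts n" "x @ [c] \<in> L_verts n"
    unfolding L_edges_def by blast
  then show "L_adj n u v" unfolding L_adj_def doubleton_eq_iff by blast
next
  assume "L_adj n u v"
  then obtain c where "u \<in> L_verts n" "v \<in> L_verts n" "v = u @ [c] \<or> u = v @ [c]"
    unfolding L_adj_def by blast
  then show "{u,v} \<in> L_edges n" unfolding L_edges_def by (auto simp: insert_commute)
qed

lemma L_edges_doubleton: "e \<in> L_edges n \<Longrightarrow> \<exists>u v. e = {u,v} \<and> L_adj n u v"
  unfolding L_edges_def L_adj_def by blast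

lemma doubleton_in_L_square_iff:
  "{u,v} \<in> graph_square (L_verts n) (L_edges n) \<longleftrightarrow>
     u \<noteq> v \<and> (L_adj n u v \<or> (\<exists>w. L_adj n u w \<and> L_adj n w v))"
proof
  assume "{u,v} \<in> graph_square (L_verts n) (L_edges n)"
  then obtain x y where "{u,v} = {x,y}" "x \<noteq> y"
      "L_adj n x y \<or> (\<exists>w. L_adj n x w \<and> L_adj n w y)"
    unfolding graph_square_def doubleton_in_L_edges_iff by blast
  then show "u \<noteq> v \<and> (L_adj n u v \<or> (\<exists>w. L_adj n u w \<and> L_adj n w v))"
    unfolding doubleton_eq_iff using L_adj_sym by blast
next
  assume "u \<noteq> v \<and> (L_adj n u v \<or> (\<exists>w. L_adj n u w \<and> L_adj n w v))"
  moreover have "u \<in> L_verts n" "v \<in> L_verts n" using calculation L_adjD by blast+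
  ultimately show "{u,v} \<in> graph_square (L_verts n) (L_edges n)"
    unfolding graph_square_def doubleton_in_L_edges_iff using L_adjD by blast
qed

lemma L_square_doubleton:
  "e \<in> graph_square (L_verts n) (L_edges n) \<Longrightarrow> \<exists>u v. e = {u,v} \<and> u \<noteq> v \<and> u \<in> L_verts n \<and> v \<in> L_verts n"
  unfolding graph_square_def by blast

lemma L_edges_subset_L_square: "L_edges n \<subseteq> graph_square (L_verts n) (L_edges n)"
  using L_edges_doubleton doubleton_in_L_square_iff L_adj_neq by blast

lemma L_adj_Nil_iff: "L_adj (Suc k) [] w \<longleftrightarrow> (\<exists>i\<le>2. w = [i])"
  unfolding L_adj_def by auto

lemma L_adj_singleton_iff: "i \<le> 2 \<Longrightarrow> L_adj (Suc k) [i] w \<longleftrightarrow> w = [] \<or> w = [i,0]"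
  unfolding L_adj_def by (auto simp: append_eq_Cons_conv)

lemma L_adj_Nil_iff': "L_adj (Suc k) v [] \<longleftrightarrow> (\<exists>i\<le>2. v = [i])"
  using L_adj_Nil_iff L_adj_sym by metis

lemma L_adj_singleton_iff': "i \<le> 2 \<Longrightarrow> L_adj (Suc k) v [i] \<longleftrightarrow> v = [] \<or> v = [i,0]"
  using L_adj_singleton_iff L_adj_sym by metis

lemma L_adj_Cons_Cons_iff:
  assumes "i \<le> 2"
  shows "L_adj (Suc k) (i#0#u) w \<longleftrightarrow> (\<exists>w'. w = i#0#w' \<and> L_adj k u w') \<or> (u = [] \<and> w = [i])"
proof
  assume adj: "L_adj (Suc k) (i#0#u) w"
  then have u: "u \<in> L_verts k" and w: "w \<in> L_verts (Suc k)" unfolding L_adj_def by auto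
  from adj obtain c where "w = i#0#u@[c] \<or> i#0#u = w@[c]" unfolding L_adj_def by auto
  then show "(\<exists>w'. w = i#0#w' \<and> L_adj k u w') \<or> (u = [] \<and> w = [i])"
  proof
    assume "w = i#0#u@[c]"
    then show ?thesis using u w unfolding L_adj_def by auto
  next
    assume up: "i#0#u = w@[c]"
    show ?thesis
    proof (cases "u = []")
      case True
      then show ?thesis using up by (cases w) auto
    next
      case False
      then have u_snoc: "u = butlast u @ [last u]" by simp
      then have "i#0#u = (i#0#butlast u) @ [last u]" by simp
      with up have "w = i#0#butlast u" by simp
      then show ?thesis using u butlast_in_L_verts[OF u] u_snoc unfolding L_adj_def by blast
    qed
  qed
next
  assume "(\<exists>w'. w = i#0#w' \<and> L_adj k u w') \<or> (u = [] \<and> w = [i])"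
  then show "L_adj (Suc k) (i#0#u) w" using assms unfolding L_adj_def by auto
qed

lemma L_adj_copy_iff: "i \<le> 2 \<Longrightarrow> L_adj (Suc k) (i#0#u) (i#0#v) \<longleftrightarrow> L_adj k u v"
  by (simp add: L_adj_Cons_Cons_iff)

lemma L_edges_copy_iff: "i \<le> 2 \<Longrightarrow> {i#0#u, i#0#v} \<in> L_edges (Suc k) \<longleftrightarrow> {u,v} \<in> L_edges k"
  by (simp add: doubleton_in_L_edges_iff L_adj_copy_iff)

lemma L_square_copy_iff:
  assumes i: "i \<le> 2"
  shows "{i#0#u, i#0#v} \<in> graph_square (L_verts (Suc k)) (L_edges (Suc k)) \<longleftrightarrow>
    {u,v} \<in> graph_square (L_verts k) (L_edges k)"
proof -
  have "(\<exists>w. L_adj (Suc k) (i#0#u) w \<and> L_adj (Suc k) w (i#0#v)) \<longleftrightarrow> (\<exists>w. L_adj k u w \<and> L_adj k w v)"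
    if "u \<noteq> v"
  proof
    assume "\<exists>w. L_adj (Suc k) (i#0#u) w \<and> L_adj (Suc k) w (i#0#v)"
    then obtain w where w1: "L_adj (Suc k) (i#0#u) w" and w2: "L_adj (Suc k) w (i#0#v)" by blast
    from w1 i consider w' where "w = i#0#w'" "L_adj k u w'" | "u = []" "w = [i]"
      by (auto simp: L_adj_Cons_Cons_iff)
    then show "\<exists>w. L_adj k u w \<and> L_adj k w v"
    proof cases
      case (1 w')
      with w2 have "L_adj k w' v" using L_adj_copy_iff[OF i] by simp
      with 1 show ?thesis by blast
    next
      case 2
      with w2 have "L_adj (Suc k) [i] (i#0#v)" using L_adj_sym by blast
      then have "v = []" using L_adj_singleton_iff[OF i] by simp
      with 2 that show ?thesis by simp
    qed
  next
    assume "\<exists>w. L_adj k u w \<and> L_adj k w v"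
    then obtain w where "L_adj k u w" "L_adj k w v" by blast
    then show "\<exists>w. L_adj (Suc k) (i#0#u) w \<and> L_adj (Suc k) w (i#0#v)"
      using L_adj_copy_iff[OF i] by blast
  qed
  then show ?thesis using i by (auto simp: doubleton_in_L_square_iff L_adj_copy_iff)
qed

lemma L_adj_branch: "L_adj n v u \<Longrightarrow> v \<noteq> [] \<Longrightarrow> u = [] \<or> hd u = hd v"
  unfolding L_adj_def by (cases u; cases v) auto

lemma L_adj_copy_branch: "L_adj n (m#0#w) u \<Longrightarrow> u \<noteq> [] \<and> hd u = m"
  unfolding L_adj_def by (cases u) auto

lemma L_edge_meets_copy:
  assumes "g \<in> L_edges n" "g \<inter> L_copy m k \<noteq> {}" "u \<in> g"
  shows "u \<noteq> [] \<and> hd u = m"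
proof -
  obtain w where w: "m#0#w \<in> g" using assms(2) by blast
  obtain x y where g: "g = {x,y}" "L_adj n x y" using L_edges_doubleton[OF assms(1)] by blast
  have "u = m#0#w \<or> L_adj n (m#0#w) u"
    using g w assms(3) L_adj_sym[of n x y] by auto
  then show ?thesis using L_adj_copy_branch[of n m w u] by auto
qed

lemma L_square_edge_meets_copy:
  assumes "g \<in> graph_square (L_verts n) (L_edges n)" "g \<inter> L_copy m k \<noteq> {}" "u \<in> g"
  shows "u = [] \<or> hd u = m"
proof -
  obtain w where w: "m#0#w \<in> g" using assms(2) by blast
  show ?thesis
  proof (cases "u = m#0#w")
    case False
    obtain x y where "g = {x,y}" "x \<noteq> y" using L_square_doubleton[OF assms(1)] by blast
    then have "g = {m#0#w, u}" using w assms(3) False by auto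
    then have "L_adj n (m#0#w) u \<or> (\<exists>z. L_adj n (m#0#w) z \<and> L_adj n z u)"
      using assms(1) doubleton_in_L_square_iff by simp
    then show ?thesis
    proof
      assume "\<exists>z. L_adj n (m#0#w) z \<and> L_adj n z u"
      then obtain z where z: "L_adj n (m#0#w) z" "L_adj n z u" by blast
      have "z \<noteq> []" "hd z = m" using L_adj_copy_branch[OF z(1)] by simp_all
      then show ?thesis using L_adj_branch[OF z(2)] by simp
    qed (use L_adj_copy_branch in simp)
  qed simp
qed

lemma ex_change_point_nat:
  fixes P :: "nat \<Rightarrow> bool"
  shows "j0 \<le> j1 \<Longrightarrow> P j0 \<noteq> P j1 \<Longrightarrow> \<exists>j. j0 \<le> j \<and> j < j1 \<and> P j \<noteq> P (Suc j)"
proof (induction j1)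
  case (Suc j1)
  show ?case
  proof (cases "j0 = Suc j1")
    case False
    then have "j0 \<le> j1" using Suc by simp
    show ?thesis
    proof (cases "P j1 = P (Suc j1)")
      case True
      then obtain j where "j0 \<le> j" "j < j1" "P j \<noteq> P (Suc j)" using Suc \<open>j0 \<le> j1\<close> by auto
      then show ?thesis by (intro exI[of _ j]) simp
    qed (use \<open>j0 \<le> j1\<close> in auto)
  qed (use Suc in simp)
qed simp

lemma root_path_crosses_cut:
  assumes y: "y \<in> L_verts n" and "j0 \<le> length y" and "(\<sigma> (take j0 y) \<le> p) \<noteq> (\<sigma> y \<le> p)"
  shows "\<exists>j\<ge>j0. {take j y, take (Suc j) y} \<in> cut_edges (L_edges n) (L_verts n) \<sigma> p"
proof -
  obtain j where j: "j0 \<le> j" "j < length y" "(\<sigma> (take j y) \<le> p) \<noteq> (\<sigma> (take (Suc j) y) \<le> p)"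
    using ex_change_point_nat[of j0 "length y" "\<lambda>j. \<sigma> (take j y) \<le> p"] assms by auto
  have "take (Suc j) y = take j y @ [y ! j]" using j(2) by (rule take_Suc_conv_app_nth)
  then have "L_adj n (take j y) (take (Suc j) y)" unfolding L_adj_def using take_in_L_verts[OF y] by blast
  then have "{take j y, take (Suc j) y} \<in> cut_edges (L_edges n) (L_verts n) \<sigma> p"
    using j(3) take_in_L_verts[OF y] by (intro doubleton_in_cut_edges) (simp_all add: doubleton_in_L_edges_iff)
  then show ?thesis using j(1) by blast
qed

section \<open>Graph families on the trees\<close>

locale L_family =
  fixes G :: "nat \<Rightarrow> nat list set set"
  assumes edge_doubleton: "e \<in> G n \<Longrightarrow> \<exists>u v. u \<in> L_verts n \<and> v \<in> L_verts n \<and> u \<noteq> v \<and> e = {u,v}"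
    and copy_edge_iff: "i \<le> 2 \<Longrightarrow> {i#0#u, i#0#v} \<in> G (Suc k) \<longleftrightarrow> {u,v} \<in> G k"
begin

lemma finite_edges: "finite (G n)"
  by (rule finite_subset[of _ "Pow (L_verts n)"]) (use edge_doubleton in auto)

lemma finite_cut_edges: "finite (cut_edges (G n) V \<sigma> p)"
  using finite_subset[OF cut_edges_subset finite_edges] .

lemma cut_matching_lift:
  assumes i: "i \<le> 2" and M: "induced_matching (cut_edges (G k) (L_verts k) (\<lambda>w. \<sigma> (i#0#w)) p) M"
  shows "induced_matching (cut_edges (G (Suc k)) (L_verts (Suc k)) \<sigma> p) ((`) (\<lambda>w. i#0#w) ` M)"
    and "card ((`) (\<lambda>w. i#0#w) ` M) = card M"
proof -
  have MW: "\<Union>M \<subseteq> L_verts k"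
    using Union_mono[OF induced_matchingD(1)[OF M]] Union_cut_edges_subset by (rule order_trans)
  have inj: "inj_on (\<lambda>w. i#0#w) (L_verts k)" by (simp add: inj_on_def)
  have edge: "{i#0#u, i#0#v} \<in> G (Suc k) \<longleftrightarrow> {u,v} \<in> G k" for u v
    using copy_edge_iff[OF i] .
  have S: "i#0#w \<in> prefix_set (L_verts (Suc k)) \<sigma> p \<longleftrightarrow> w \<in> prefix_set (L_verts k) (\<lambda>w. \<sigma> (i#0#w)) p"
    and T: "i#0#w \<in> L_verts (Suc k) - prefix_set (L_verts (Suc k)) \<sigma> p \<longleftrightarrow>
      w \<in> L_verts k - prefix_set (L_verts k) (\<lambda>w. \<sigma> (i#0#w)) p" for w
    using i by (auto simp: prefix_set_def)
  note transport = induced_matching_bip_edges_image[OF inj edge S T Diff_disjoint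
      M[unfolded cut_edges_def] MW]
  show "induced_matching (cut_edges (G (Suc k)) (L_verts (Suc k)) \<sigma> p) ((`) (\<lambda>w. i#0#w) ` M)"
    unfolding cut_edges_def by (rule transport(1))
  show "card ((`) (\<lambda>w. i#0#w) ` M) = card M" by (rule transport(2))
qed

lemma cut_matching_restrict:
  assumes i: "i \<le> 2" and M: "induced_matching (cut_edges (G (Suc k)) (L_verts (Suc k)) \<sigma> p) M"
    and MC: "\<Union>M \<subseteq> L_copy i k"
  shows "\<exists>M'. induced_matching (cut_edges (G k) (L_verts k) (\<lambda>w. \<sigma> (i#0#w)) p) M' \<and> card M' = card M"
proof -
  have inj: "inj_on (drop 2) (L_copy i k)" by (auto simp: inj_on_def)
  have edge: "{drop 2 u, drop 2 v} \<in> G k \<longleftrightarrow> {u,v} \<in> G (Suc k)"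
    if "u \<in> L_copy i k" "v \<in> L_copy i k" for u v
    using that copy_edge_iff[OF i] by auto
  have S: "drop 2 w \<in> prefix_set (L_verts k) (\<lambda>w. \<sigma> (i#0#w)) p \<longleftrightarrow> w \<in> prefix_set (L_verts (Suc k)) \<sigma> p"
    and T: "drop 2 w \<in> L_verts k - prefix_set (L_verts k) (\<lambda>w. \<sigma> (i#0#w)) p \<longleftrightarrow>
      w \<in> L_verts (Suc k) - prefix_set (L_verts (Suc k)) \<sigma> p"
    if "w \<in> L_copy i k" for w
    using that i by (auto simp: prefix_set_def)
  note transport = induced_matching_bip_edges_image[OF inj edge S T Diff_disjoint
      M[unfolded cut_edges_def] MC]
  show ?thesis
    using transport unfolding cut_edges_def by blast
qed

end

section \<open>The lower bound\<close>

lemma median_of_three: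
  fixes P :: "nat \<Rightarrow> 'a::linorder"
  shows "\<exists>a m b. a \<le> 2 \<and> m \<le> 2 \<and> b \<le> 2 \<and> a \<noteq> m \<and> b \<noteq> m \<and> P a \<le> P m \<and> P m \<le> P b"
proof -
  consider "P 0 \<le> P 1" "P 1 \<le> P 2" | "P 0 \<le> P 2" "P 2 \<le> P 1" | "P 1 \<le> P 0" "P 0 \<le> P 2"
    | "P 1 \<le> P 2" "P 2 \<le> P 0" | "P 2 \<le> P 0" "P 0 \<le> P 1" | "P 2 \<le> P 1" "P 1 \<le> P 0"
    using le_cases[of "P 0" "P 1"] le_cases[of "P 1" "P 2"] le_cases[of "P 0" "P 2"] by blast
  then show ?thesis
  proof cases
    case 1 then show ?thesis by (intro exI[of _ 0] exI[of _ 1] exI[of _ 2]) simp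
  next
    case 2 then show ?thesis by (intro exI[of _ 0] exI[of _ 2] exI[of _ 1]) simp
  next
    case 3 then show ?thesis by (intro exI[of _ 1] exI[of _ 0] exI[of _ 2]) simp
  next
    case 4 then show ?thesis by (intro exI[of _ 1] exI[of _ 2] exI[of _ 0]) simp
  next
    case 5 then show ?thesis by (intro exI[of _ 2] exI[of _ 0] exI[of _ 1]) simp
  next
    case 6 then show ?thesis by (intro exI[of _ 2] exI[of _ 1] exI[of _ 0]) simp
  qed
qed

locale L_family_lower = L_family +
  assumes root_edge: "{[],[0]} \<in> G 1"
    and separating_edge: "\<lbrakk>a \<le> 2; b \<le> 2; a \<noteq> m; b \<noteq> m; x \<in> L_verts k; y \<in> L_verts k;
        \<sigma> (a#0#x) \<le> p; \<not> \<sigma> (b#0#y) \<le> p\<rbrakk> \<Longrightarrow>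
      \<exists>e\<in>cut_edges (G (Suc k)) (L_verts (Suc k)) \<sigma> p. \<forall>g\<in>G (Suc k). g \<inter> e \<noteq> {} \<longrightarrow> g \<inter> L_copy m k = {}"
begin

lemma root_cut_matching:
  assumes "inj_on \<sigma> (L_verts 1)"
  shows "\<exists>p M. induced_matching (cut_edges (G 1) (L_verts 1) \<sigma> p) M \<and> 1 \<le> card M"
proof -
  have V: "[] \<in> L_verts 1" "[0] \<in> L_verts 1" by simp_all
  then have "\<sigma> [] \<noteq> \<sigma> [0]" using assms by (metis inj_onD list.distinct(1))
  then have "{[],[0]} \<in> cut_edges (G 1) (L_verts 1) \<sigma> (min (\<sigma> []) (\<sigma> [0]))"
    using V root_edge by (intro doubleton_in_cut_edges) auto
  then show ?thesis using induced_matching_singleton by fastforce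
qed

lemma cut_matching_step:
  assumes "0 < k"
    and copies: "\<And>i. i \<le> 2 \<Longrightarrow>
      \<exists>p M. induced_matching (cut_edges (G k) (L_verts k) (\<lambda>w. \<sigma> (i#0#w)) p) M \<and> k \<le> card M"
  shows "\<exists>p M. induced_matching (cut_edges (G (Suc k)) (L_verts (Suc k)) \<sigma> p) M \<and> Suc k \<le> card M"
proof -
  obtain P MM where PM: "\<And>i. i \<le> 2 \<Longrightarrow> induced_matching (cut_edges (G k) (L_verts k) (\<lambda>w. \<sigma> (i#0#w)) (P i)) (MM i)"
      "\<And>i. i \<le> 2 \<Longrightarrow> k \<le> card (MM i)"
    using copies by metis
  obtain a m b where amb: "a \<le> 2" "m \<le> 2" "b \<le> 2" "a \<noteq> m" "b \<noteq> m" "P a \<le> P m" "P m \<le> P b"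
    using median_of_three[of P] by blast
  have "MM a \<noteq> {}" "MM b \<noteq> {}" using PM(2)[OF amb(1)] PM(2)[OF amb(3)] \<open>0 < k\<close> by auto
  then obtain x y where "x \<in> L_verts k" "\<sigma> (a#0#x) \<le> P a" "y \<in> L_verts k" "\<not> \<sigma> (b#0#y) \<le> P b"
    using induced_matching_cut_edges_sides[OF PM(1)[OF amb(1)]] induced_matching_cut_edges_sides[OF PM(1)[OF amb(3)]]
    by blast
  then have xy: "x \<in> L_verts k" "y \<in> L_verts k" "\<sigma> (a#0#x) \<le> P m" "\<not> \<sigma> (b#0#y) \<le> P m"
    using amb(6,7) by simp_all
  obtain e where e: "e \<in> cut_edges (G (Suc k)) (L_verts (Suc k)) \<sigma> (P m)"
      and far: "\<forall>g\<in>G (Suc k). g \<inter> e \<noteq> {} \<longrightarrow> g \<inter> L_copy m k = {}"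
    using separating_edge[OF amb(1,3,4,5) xy] by blast
  define M where "M = (`) (\<lambda>w. m#0#w) ` MM m"
  note lift = cut_matching_lift[OF amb(2) PM(1)[OF amb(2)], folded M_def]
  have "\<Union>(MM m) \<subseteq> L_verts k"
    using Union_mono[OF induced_matchingD(1)[OF PM(1)[OF amb(2)]]] Union_cut_edges_subset by (rule order_trans)
  then have MC: "\<Union>M \<subseteq> L_copy m k" unfolding M_def image_Union[symmetric] by (rule image_mono)
  have "e \<noteq> {}" using e by (auto simp: mem_cut_edges)
  note ext = induced_matching_insert_far[OF lift(1) e this cut_edges_subset MC far]
  have "card (insert e M) = Suc (card M)"
    using ext(2) finite_induced_matching[OF finite_cut_edges lift(1)] by simp
  then show ?thesis using ext(1) lift(2) PM(2)[OF amb(2)] by (intro exI[of _ "P m"] exI[of _ "insert e M"]) simp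
qed

lemma large_cut_matching:
  "inj_on \<sigma> (L_verts k) \<Longrightarrow> \<exists>p M. induced_matching (cut_edges (G k) (L_verts k) \<sigma> p) M \<and> k \<le> card M"
proof (induction k arbitrary: \<sigma>)
  case 0
  show ?case using induced_matching_empty by fastforce
next
  case (Suc k)
  show ?case
  proof (cases "k = 0")
    case True
    then show ?thesis using root_cut_matching Suc.prems by simp
  next
    case False
    have "inj_on (\<lambda>w. \<sigma> (i#0#w)) (L_verts k)" if "i \<le> 2" for i
    proof (rule inj_onI)
      fix x y assume "x \<in> L_verts k" "y \<in> L_verts k" "\<sigma> (i#0#x) = \<sigma> (i#0#y)"
      then have "i#0#x = i#0#y" using that by (intro inj_onD[OF Suc.prems]) simp_all
      then show "x = y" by simp
    qed
    then show ?thesis using Suc.IH False by (intro cut_matching_step) auto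
  qed
qed

lemma mim_width_ge:
  assumes "linear_layout (L_verts k) \<sigma>"
  shows "k \<le> mim_width (L_verts k) (G k) \<sigma>"
proof -
  obtain p M where M: "induced_matching (cut_edges (G k) (L_verts k) \<sigma> p) M" "k \<le> card M"
    using large_cut_matching assms bij_betw_imp_inj_on unfolding linear_layout_def by blast
  have "card M \<le> mim (cut_edges (G k) (L_verts k) \<sigma> p)" by (rule card_le_mim[OF finite_cut_edges M(1)])
  also have "\<dots> \<le> mim_width (L_verts k) (G k) \<sigma>" by (rule mim_cut_le_mim_width[OF assms])
  finally show ?thesis using M(2) by simp
qed

end

section \<open>The upper bound\<close>

definition copy_offset :: "nat \<Rightarrow> nat \<Rightarrow> nat" where
  "copy_offset i n = (if i = 0 then 1 else if i = 1 then n + 2 else 2 * n + 4)"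

text \<open>\<open>L(k+1)\<close> is laid out as: the root, copy 0, \<open>[0]\<close>, copy 1, \<open>[1]\<close>, \<open>[2]\<close>, copy 2,
  each copy recursively; \<open>copy_offset i n\<close> is the number of vertices placed before copy \<open>i\<close>.\<close>

fun L_layout :: "nat \<Rightarrow> nat list \<Rightarrow> nat" where
  "L_layout 0 v = 1"
| "L_layout (Suc k) v =
    (if v = [] then 1
     else if v = [0] then card (L_verts k) + 2
     else if v = [1] then 2 * card (L_verts k) + 3
     else if v = [2] then 2 * card (L_verts k) + 4
     else copy_offset (hd v) (card (L_verts k)) + L_layout k (drop 2 v))"

declare L_layout.simps(2)[simp del]

lemma L_layout_Nil[simp]: "L_layout k [] = 1"
  by (cases k) (simp_all add: L_layout.simps(2))

lemma L_layout_Suc_simps[simp]: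
  "L_layout (Suc k) [0] = card (L_verts k) + 2"
  "L_layout (Suc k) [1] = 2 * card (L_verts k) + 3"
  "L_layout (Suc k) [Suc 0] = 2 * card (L_verts k) + 3"
  "L_layout (Suc k) [2] = 2 * card (L_verts k) + 4"
  "L_layout (Suc k) (i#0#w) = copy_offset i (card (L_verts k)) + L_layout k w"
  by (simp_all add: L_layout.simps(2))

definition L_top :: "nat list set" where
  "L_top = {[],[0],[1],[2]}"

lemma L_layout_range: "w \<in> L_verts k \<Longrightarrow> 1 \<le> L_layout k w \<and> L_layout k w \<le> card (L_verts k)"
proof (induction k arbitrary: w)
  case (Suc k)
  have n: "0 < card (L_verts k)" by (rule card_L_verts_pos)
  from Suc.prems consider "w = []" | i where "i \<le> 2" "w = [i]"
    | i u where "i \<le> 2" "u \<in> L_verts k" "w = i#0#u"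
    unfolding mem_L_verts_Suc by blast
  then show ?case
  proof cases
    case (3 i u)
    then show ?thesis using Suc.IH[of u] by (auto simp: card_L_verts_Suc nat_le_2_iff copy_offset_def)
  qed (use n in \<open>auto simp: card_L_verts_Suc nat_le_2_iff\<close>)
qed simp

lemma inj_on_L_layout: "inj_on (L_layout k) (L_verts k)"
proof (induction k)
  case (Suc k)
  have n: "0 < card (L_verts k)" by (rule card_L_verts_pos)
  show ?case
  proof (rule inj_onI)
    fix x y assume x: "x \<in> L_verts (Suc k)" and y: "y \<in> L_verts (Suc k)"
      and eq: "L_layout (Suc k) x = L_layout (Suc k) y"
    from x consider "x = []" | i where "i \<le> 2" "x = [i]" | i u where "i \<le> 2" "u \<in> L_verts k" "x = i#0#u"
      unfolding mem_L_verts_Suc by blast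
    note cx = this
    from y consider "y = []" | j where "j \<le> 2" "y = [j]" | j v where "j \<le> 2" "v \<in> L_verts k" "y = j#0#v"
      unfolding mem_L_verts_Suc by blast
    note cy = this
    show "x = y"
    proof (cases rule: cx)
      case 1
      then show ?thesis
      proof (cases rule: cy)
        case 3 then show ?thesis using eq 1 L_layout_range[of v k] by (auto simp: nat_le_2_iff copy_offset_def)
      qed (use eq 1 n in \<open>auto simp: nat_le_2_iff\<close>)
    next
      case (2 i)
      then show ?thesis
      proof (cases rule: cy)
        case 3 then show ?thesis using eq 2 L_layout_range[of v k] by (auto simp: nat_le_2_iff copy_offset_def)
      qed (use eq 2 n in \<open>auto simp: nat_le_2_iff\<close>)
    next
      case (3 i u)
      then show ?thesis
      proof (cases rule: cy)
        case (3 j v)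
        have "i = j" using eq 3 \<open>x = i#0#u\<close> \<open>i \<le> 2\<close>
            L_layout_range[OF \<open>u \<in> L_verts k\<close>] L_layout_range[OF \<open>v \<in> L_verts k\<close>]
          by (auto simp: nat_le_2_iff copy_offset_def)
        then show ?thesis using eq 3 \<open>x = i#0#u\<close> \<open>u \<in> L_verts k\<close> inj_onD[OF Suc.IH] by simp
      qed (use eq 3 L_layout_range[of u k] in \<open>auto simp: nat_le_2_iff copy_offset_def\<close>)
    qed
  qed
qed simp

lemma linear_layout_L_layout: "linear_layout (L_verts k) (L_layout k)"
proof -
  have "L_layout k ` L_verts k \<subseteq> {1..card (L_verts k)}" using L_layout_range by auto
  moreover have "card (L_layout k ` L_verts k) = card {1..card (L_verts k)}"
    using card_image[OF inj_on_L_layout] by simp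
  ultimately have "L_layout k ` L_verts k = {1..card (L_verts k)}"
    by (intro card_subset_eq) auto
  then show ?thesis using inj_on_L_layout unfolding linear_layout_def bij_betw_def by blast
qed

definition cut_copy :: "nat \<Rightarrow> nat \<Rightarrow> nat" where
  "cut_copy n p = (if p \<le> n + 1 then 0 else if p \<le> 2 * n + 3 then 1 else 2)"

lemma copy_crossing_cut:
  assumes "i \<le> 2" "s \<in> L_verts k" "t \<in> L_verts k"
    and "L_layout (Suc k) (i#0#s) \<le> p" "\<not> L_layout (Suc k) (i#0#t) \<le> p"
  shows "i = cut_copy (card (L_verts k)) p"
  using assms L_layout_range[of s k] L_layout_range[of t k]
  by (auto simp: nat_le_2_iff copy_offset_def cut_copy_def)


locale L_family_upper = L_family +
  assumes edge_top_or_copy: "e \<in> G (Suc k) \<Longrightarrow> e \<inter> L_top \<noteq> {} \<or> (\<exists>i\<le>2. e \<subseteq> L_copy i k)"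
    and top_cut_edges_linked: "\<lbrakk>{s,t} \<in> G (Suc k); {s',t'} \<in> G (Suc k);
        {s,t} \<inter> L_top \<noteq> {}; {s',t'} \<inter> L_top \<noteq> {};
        L_layout (Suc k) s \<le> p; \<not> L_layout (Suc k) t \<le> p;
        L_layout (Suc k) s' \<le> p; \<not> L_layout (Suc k) t' \<le> p; s \<noteq> s'; t \<noteq> t'\<rbrakk> \<Longrightarrow>
      {s,t'} \<in> G (Suc k) \<or> {s',t} \<in> G (Suc k)"
begin

lemma card_top_cut_matching:
  assumes M: "induced_matching (cut_edges (G (Suc k)) (L_verts (Suc k)) (L_layout (Suc k)) p) M"
  shows "card {e\<in>M. e \<inter> L_top \<noteq> {}} \<le> 1"
proof -
  let ?S = "prefix_set (L_verts (Suc k)) (L_layout (Suc k)) p"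
  let ?T = "L_verts (Suc k) - ?S"
  have "e = f" if "e \<in> M" "f \<in> M" "e \<inter> L_top \<noteq> {}" "f \<inter> L_top \<noteq> {}" for e f
  proof (rule ccontr)
    assume "e \<noteq> f"
    obtain s t where st: "s \<in> L_verts (Suc k)" "t \<in> L_verts (Suc k)" "L_layout (Suc k) s \<le> p"
        "\<not> L_layout (Suc k) t \<le> p" "e = {s,t}" "e \<in> G (Suc k)"
      using induced_matching_cut_edgesD[OF M \<open>e \<in> M\<close>] by blast
    obtain s' t' where st': "s' \<in> L_verts (Suc k)" "t' \<in> L_verts (Suc k)" "L_layout (Suc k) s' \<le> p"
        "\<not> L_layout (Suc k) t' \<le> p" "f = {s',t'}" "f \<in> G (Suc k)"
      using induced_matching_cut_edgesD[OF M \<open>f \<in> M\<close>] by blast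
    have neq: "s \<noteq> s'" "t \<noteq> t'"
      using induced_matchingD(2)[OF M that(1,2) \<open>e \<noteq> f\<close>] st(5) st'(5) by auto
    have edges: "{s,t} \<in> G (Suc k)" "{s',t'} \<in> G (Suc k)"
      and top: "{s,t} \<inter> L_top \<noteq> {}" "{s',t'} \<inter> L_top \<noteq> {}"
      using st st' that(3,4) by simp_all
    have "{s,t'} \<in> G (Suc k) \<or> {s',t} \<in> G (Suc k)"
      by (rule top_cut_edges_linked[OF edges top st(3,4) st'(3,4) neq])
    moreover have sides: "s \<in> ?S" "t \<in> ?T" "s' \<in> ?S" "t' \<in> ?T"
      using st st' by (simp_all add: prefix_set_def)
    have in_M: "{s,t} \<in> M" "{s',t'} \<in> M" and ne: "{s,t} \<noteq> {s',t'}" "{s',t'} \<noteq> {s,t}"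
      using that st(5) st'(5) \<open>e \<noteq> f\<close> by auto
    note unlinked = induced_matching_bip_edges_unlinked[OF M[unfolded cut_edges_def]]
    have "{s,t'} \<notin> G (Suc k)" by (rule unlinked[OF in_M ne(1) sides])
    moreover have "{s',t} \<notin> G (Suc k)" by (rule unlinked[OF in_M(2,1) ne(2) sides(3,4,1,2)])
    ultimately show False by blast
  qed
  moreover have "finite {e\<in>M. e \<inter> L_top \<noteq> {}}"
    using finite_induced_matching[OF finite_cut_edges M] by simp
  ultimately have "card {e\<in>M. e \<inter> L_top \<noteq> {}} \<le> Suc 0"
    by (subst card_le_Suc0_iff_eq) blast+
  then show ?thesis by simp
qed

lemma card_copy_cut_matching:
  assumes "c \<le> 2"
    and M: "induced_matching (cut_edges (G (Suc k)) (L_verts (Suc k)) (L_layout (Suc k)) p) M"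
    and "\<Union>M \<subseteq> L_copy c k"
    and IH: "\<And>q. mim (cut_edges (G k) (L_verts k) (L_layout k) q) \<le> k"
  shows "card M \<le> k"
proof -
  let ?d = "copy_offset c (card (L_verts k))"
  obtain M' where M': "induced_matching (cut_edges (G k) (L_verts k) (\<lambda>w. ?d + L_layout k w) p) M'"
      "card M' = card M"
    using cut_matching_restrict[OF assms(1-3)] by auto
  have "cut_edges (G k) (L_verts k) (\<lambda>w. ?d + L_layout k w) p = cut_edges (G k) (L_verts k) (L_layout k) (p - ?d)"
    using L_layout_range by (intro cut_edges_shift) fastforce
  then have "card M' \<le> mim (cut_edges (G k) (L_verts k) (L_layout k) (p - ?d))"
    using card_le_mim[OF finite_cut_edges] M'(1) by simp
  then show ?thesis using IH[of "p - ?d"] M'(2) by simp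
qed

lemma mim_cut_L_layout_le: "mim (cut_edges (G k) (L_verts k) (L_layout k) p) \<le> k"
proof (induction k arbitrary: p)
  case 0
  have empty: "cut_edges (G 0) (L_verts 0) (L_layout 0) p = {}" by (auto simp: mem_cut_edges)
  show ?case unfolding empty by simp
next
  case (Suc k)
  show ?case
  proof (rule mim_leI[OF finite_cut_edges])
    fix M assume M: "induced_matching (cut_edges (G (Suc k)) (L_verts (Suc k)) (L_layout (Suc k)) p) M"
    let ?c = "cut_copy (card (L_verts k)) p"
    define A where "A = {e\<in>M. e \<inter> L_top \<noteq> {}}"
    define B where "B = {e\<in>M. e \<subseteq> L_copy ?c k}"
    have "M \<subseteq> A \<union> B"
    proof
      fix e assume "e \<in> M"
      then obtain s t where st: "s \<in> L_verts (Suc k)" "t \<in> L_verts (Suc k)" "L_layout (Suc k) s \<le> p"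
          "\<not> L_layout (Suc k) t \<le> p" "e = {s,t}" "e \<in> G (Suc k)"
        using induced_matching_cut_edgesD[OF M] by blast
      show "e \<in> A \<union> B"
      proof (cases "e \<inter> L_top = {}")
        case True
        then obtain i where "i \<le> 2" "e \<subseteq> L_copy i k" using edge_top_or_copy st(6) by blast
        moreover from this obtain s0 t0 where "s0 \<in> L_verts k" "t0 \<in> L_verts k" "s = i#0#s0" "t = i#0#t0"
          using st(5) by blast
        ultimately show ?thesis
          using copy_crossing_cut[of i s0 k t0 p] st(3,4) \<open>e \<in> M\<close> unfolding B_def by auto
      qed (use \<open>e \<in> M\<close> A_def in blast)
    qed
    then have "card M \<le> card (A \<union> B)"
      using finite_induced_matching[OF finite_cut_edges M] by (intro card_mono) (auto simp: A_def B_def)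
    also have "\<dots> \<le> card A + card B" by (rule card_Un_le)
    finally have "card M \<le> card A + card B" .
    moreover have "card A \<le> 1" unfolding A_def by (rule card_top_cut_matching[OF M])
    moreover have "card B \<le> k"
      using M Suc.IH unfolding B_def
      by (intro card_copy_cut_matching[of ?c]) (auto simp: cut_copy_def intro: induced_matching_subset)
    ultimately show "card M \<le> Suc k" by linarith
  qed
qed

lemma mim_width_L_layout_le: "mim_width (L_verts k) (G k) (L_layout k) \<le> k"
  by (rule mim_width_leI, rule mim_cut_L_layout_le)

end

section \<open>The tree and its square\<close>

lemma take_Cons_branch: "take j (c#r) = [] \<or> hd (take j (c#r)) = c"
  by (cases j) auto

lemma L_edges_separating_edge:
  assumes "a \<le> 2" "b \<le> 2" "a \<noteq> m" "b \<noteq> m" "x \<in> L_verts k" "y \<in> L_verts k"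
    and "\<sigma> (a#0#x) \<le> p" "\<not> \<sigma> (b#0#y) \<le> p"
  shows "\<exists>e\<in>cut_edges (L_edges (Suc k)) (L_verts (Suc k)) \<sigma> p.
    \<forall>g\<in>L_edges (Suc k). g \<inter> e \<noteq> {} \<longrightarrow> g \<inter> L_copy m k = {}"
proof -
  obtain c z where cz: "c \<le> 2" "c \<noteq> m" "z \<in> L_verts k" "(\<sigma> (take 0 (c#0#z)) \<le> p) \<noteq> (\<sigma> (c#0#z) \<le> p)"
  proof (cases "\<sigma> [] \<le> p")
    case True then show ?thesis using that[of b y] assms by simp
  next
    case False then show ?thesis using that[of a x] assms by simp
  qed
  then obtain j where e: "{take j (c#0#z), take (Suc j) (c#0#z)} \<in> cut_edges (L_edges (Suc k)) (L_verts (Suc k)) \<sigma> p"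
    using root_path_crosses_cut[of "c#0#z" "Suc k" 0] by auto
  have far: "g \<inter> L_copy m k = {}"
    if g: "g \<in> L_edges (Suc k)" "g \<inter> {take j (c#0#z), take (Suc j) (c#0#z)} \<noteq> {}" for g
  proof (rule ccontr)
    assume "g \<inter> L_copy m k \<noteq> {}"
    obtain i where "take i (c#0#z) \<in> g" using g(2) by blast
    from L_edge_meets_copy[OF g(1) \<open>g \<inter> L_copy m k \<noteq> {}\<close> this] show False
      using take_Cons_branch[of i c "0#z"] cz(2) by auto
  qed
  show ?thesis by (intro bexI[OF _ e] ballI impI far)
qed

lemma L_square_separating_edge:
  assumes "a \<le> 2" "b \<le> 2" "a \<noteq> m" "b \<noteq> m" "x \<in> L_verts k" "y \<in> L_verts k"
    and "\<sigma> (a#0#x) \<le> p" "\<not> \<sigma> (b#0#y) \<le> p"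
  shows "\<exists>e\<in>cut_edges (graph_square (L_verts (Suc k)) (L_edges (Suc k))) (L_verts (Suc k)) \<sigma> p.
    \<forall>g\<in>graph_square (L_verts (Suc k)) (L_edges (Suc k)). g \<inter> e \<noteq> {} \<longrightarrow> g \<inter> L_copy m k = {}"
proof -
  let ?G = "graph_square (L_verts (Suc k)) (L_edges (Suc k))"
  have "\<exists>e\<in>cut_edges ?G (L_verts (Suc k)) \<sigma> p. \<forall>u\<in>e. u \<noteq> [] \<and> hd u \<noteq> m"
  proof (cases "(\<sigma> [a] \<le> p) = (\<sigma> [b] \<le> p)")
    case True
    obtain c z where cz: "c \<le> 2" "c \<noteq> m" "z \<in> L_verts k" "(\<sigma> (take 1 (c#0#z)) \<le> p) \<noteq> (\<sigma> (c#0#z) \<le> p)"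
    proof (cases "\<sigma> [a] \<le> p")
      case True then show ?thesis using that[of b y] assms \<open>(\<sigma> [a] \<le> p) = (\<sigma> [b] \<le> p)\<close> by simp
    next
      case False then show ?thesis using that[of a x] assms by simp
    qed
    then obtain j where "1 \<le> j"
      and e: "{take j (c#0#z), take (Suc j) (c#0#z)} \<in> cut_edges (L_edges (Suc k)) (L_verts (Suc k)) \<sigma> p"
      using root_path_crosses_cut[of "c#0#z" "Suc k" 1] by auto
    have "{take j (c#0#z), take (Suc j) (c#0#z)} \<in> cut_edges ?G (L_verts (Suc k)) \<sigma> p"
      using subsetD[OF cut_edges_mono[OF L_edges_subset_L_square] e] .
    moreover have "\<forall>u\<in>{take j (c#0#z), take (Suc j) (c#0#z)}. u \<noteq> [] \<and> hd u \<noteq> m"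
      using \<open>1 \<le> j\<close> cz(2) by (simp add: take_Cons')
    ultimately show ?thesis by blast
  next
    case False
    then have "a \<noteq> b" by blast
    moreover have "L_adj (Suc k) [a] []" "L_adj (Suc k) [] [b]"
      using assms(1,2) by (simp_all add: L_adj_singleton_iff L_adj_Nil_iff)
    ultimately have "{[a],[b]} \<in> ?G" unfolding doubleton_in_L_square_iff by blast
    then have "{[a],[b]} \<in> cut_edges ?G (L_verts (Suc k)) \<sigma> p"
      using False assms(1,2) by (intro doubleton_in_cut_edges) simp_all
    moreover have "\<forall>u\<in>{[a],[b]}. u \<noteq> [] \<and> hd u \<noteq> m" using assms(3,4) by simp
    ultimately show ?thesis by blast
  qed
  then obtain e where e: "e \<in> cut_edges ?G (L_verts (Suc k)) \<sigma> p" "\<forall>u\<in>e. u \<noteq> [] \<and> hd u \<noteq> m" ..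
  have far: "g \<inter> L_copy m k = {}" if g: "g \<in> ?G" "g \<inter> e \<noteq> {}" for g
  proof (rule ccontr)
    assume "g \<inter> L_copy m k \<noteq> {}"
    obtain u where "u \<in> g" "u \<in> e" using g(2) by blast
    from L_square_edge_meets_copy[OF g(1) \<open>g \<inter> L_copy m k \<noteq> {}\<close> \<open>u \<in> g\<close>] show False
      using e(2) \<open>u \<in> e\<close> by blast
  qed
  show ?thesis by (intro bexI[OF _ e(1)] ballI impI far)
qed

lemma L_verts_Suc_not_top: "v \<in> L_verts (Suc k) \<Longrightarrow> v \<notin> L_top \<Longrightarrow> \<exists>i\<le>2. \<exists>w\<in>L_verts k. v = i#0#w"
  unfolding mem_L_verts_Suc L_top_def by (auto simp: nat_le_2_iff)

lemma L_edges_top_or_copy: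
  assumes e: "e \<in> L_edges (Suc k)" and top: "e \<inter> L_top = {}"
  shows "\<exists>i\<le>2. e \<subseteq> L_copy i k"
proof -
  obtain u v where uv: "e = {u,v}" "L_adj (Suc k) u v" using L_edges_doubleton[OF e] by blast
  have "u \<notin> L_top" "v \<notin> L_top" using top uv(1) by auto
  then obtain i u' where i: "i \<le> 2" "u' \<in> L_verts k" "u = i#0#u'"
    using L_verts_Suc_not_top L_adjD[OF uv(2)] by blast
  then have "(\<exists>v'. v = i#0#v' \<and> L_adj k u' v') \<or> (u' = [] \<and> v = [i])"
    using L_adj_Cons_Cons_iff uv(2) by blast
  then obtain v' where "v = i#0#v'" "v' \<in> L_verts k"
    using \<open>v \<notin> L_top\<close> i(1) L_adjD unfolding L_top_def by (auto simp: nat_le_2_iff)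
  then show ?thesis using uv i by auto
qed

lemma L_square_top_or_copy:
  assumes e: "e \<in> graph_square (L_verts (Suc k)) (L_edges (Suc k))" and top: "e \<inter> L_top = {}"
  shows "\<exists>i\<le>2. e \<subseteq> L_copy i k"
proof -
  obtain u v where uv: "e = {u,v}" "u \<noteq> v" "u \<in> L_verts (Suc k)" "v \<in> L_verts (Suc k)"
    using L_square_doubleton[OF e] by blast
  have adj: "L_adj (Suc k) u v \<or> (\<exists>z. L_adj (Suc k) u z \<and> L_adj (Suc k) z v)"
    using e uv doubleton_in_L_square_iff by blast
  have "u \<notin> L_top" "v \<notin> L_top" using top uv(1) by auto
  then obtain i u' where i: "i \<le> 2" "u' \<in> L_verts k" "u = i#0#u'" using L_verts_Suc_not_top uv by blast
  have branch: "\<exists>v'\<in>L_verts k. w = i#0#v'" if "L_adj (Suc k) (i#0#u') w" "w \<notin> L_top" for u' w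
    using that L_adj_Cons_Cons_iff[OF i(1)] L_adjD i(1) unfolding L_top_def by (auto simp: nat_le_2_iff)
  from adj have "\<exists>v'\<in>L_verts k. v = i#0#v'"
  proof
    assume "\<exists>z. L_adj (Suc k) u z \<and> L_adj (Suc k) z v"
    then obtain z where z: "L_adj (Suc k) (i#0#u') z" "L_adj (Suc k) z v" using i(3) by blast
    show ?thesis
    proof (cases "z \<in> L_top")
      case False
      then obtain z' where "z = i#0#z'" using branch[OF z(1)] by blast
      then show ?thesis using branch[OF _ \<open>v \<notin> L_top\<close>] z(2) by blast
    next
      case True
      then have "z = [i]" using z(1) L_adj_Cons_Cons_iff[OF i(1)] unfolding L_top_def by auto
      then have "v = [] \<or> v = [i,0]" using L_adj_singleton_iff[OF i(1)] z(2) by blast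
      then show ?thesis using \<open>v \<notin> L_top\<close> unfolding L_top_def by (auto intro: bexI[of _ "[]"])
    qed
  qed (use branch \<open>v \<notin> L_top\<close> i(3) in blast)
  then show ?thesis using uv i by auto
qed

text \<open>The cut edges touching \<open>L_top\<close>, by range of the cut position \<open>p\<close>, where \<open>n = |L(k)|\<close>.\<close>

definition L_top_cut_edge :: "nat \<Rightarrow> nat \<Rightarrow> nat list \<Rightarrow> nat list \<Rightarrow> bool" where
  "L_top_cut_edge n p s t \<longleftrightarrow>
     (p \<le> n + 1 \<longrightarrow> s = [] \<or> t = [0]) \<and>
     (n + 2 \<le> p \<and> p \<le> 2 * n + 2 \<longrightarrow> s = [] \<or> t = [1]) \<and>
     (p = 2 * n + 3 \<longrightarrow> t = [2]) \<and>
     (2 * n + 4 \<le> p \<longrightarrow> s = [2])"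

lemma L_edges_top_cut_edge:
  assumes e: "{s,t} \<in> L_edges (Suc k)" and "L_layout (Suc k) s \<le> p" "\<not> L_layout (Suc k) t \<le> p"
    and top: "{s,t} \<inter> L_top \<noteq> {}"
  shows "L_top_cut_edge (card (L_verts k)) p s t"
proof -
  have n: "0 < card (L_verts k)" by (rule card_L_verts_pos)
  have a: "L_adj (Suc k) s t" using e doubleton_in_L_edges_iff by blast
  from top have "s = [] \<or> s = [0] \<or> s = [1] \<or> s = [2] \<or> t = [] \<or> t = [0] \<or> t = [1] \<or> t = [2]"
    unfolding L_top_def by auto
  then show ?thesis
  proof (elim disjE)
    assume "s = []" then show ?thesis using a assms n by (auto simp: L_adj_Nil_iff L_top_cut_edge_def nat_le_2_iff)
  next
    assume "t = []" then show ?thesis using a assms n by (auto simp: L_adj_Nil_iff' L_top_cut_edge_def nat_le_2_iff)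
  next
    assume "s = [0]" then show ?thesis using a assms n L_adj_singleton_iff[of 0 k t]
      by (auto simp: L_top_cut_edge_def copy_offset_def)
  next
    assume "s = [1]" then show ?thesis using a assms n L_adj_singleton_iff[of 1 k t]
      by (auto simp: L_top_cut_edge_def copy_offset_def)
  next
    assume "s = [2]" then show ?thesis using a assms n L_adj_singleton_iff[of 2 k t]
      by (auto simp: L_top_cut_edge_def copy_offset_def)
  next
    assume "t = [0]" then show ?thesis using a assms n L_adj_singleton_iff'[of 0 k s]
      by (auto simp: L_top_cut_edge_def copy_offset_def)
  next
    assume "t = [1]" then show ?thesis using a assms n L_adj_singleton_iff'[of 1 k s]
      by (auto simp: L_top_cut_edge_def copy_offset_def)
  next
    assume "t = [2]" then show ?thesis using a assms n L_adj_singleton_iff'[of 2 k s]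
      by (auto simp: L_top_cut_edge_def copy_offset_def)
  qed
qed

lemma L_top_cut_edges_linked:
  assumes "L_top_cut_edge (card (L_verts k)) p s t" "L_top_cut_edge (card (L_verts k)) p s' t'" "s \<noteq> s'" "t \<noteq> t'"
  shows "{s,t'} \<in> L_edges (Suc k) \<or> {s',t} \<in> L_edges (Suc k)"
proof -
  have "{[],[0]} \<in> L_edges (Suc k)" "{[0],[]} \<in> L_edges (Suc k)"
    "{[],[1]} \<in> L_edges (Suc k)" "{[1],[]} \<in> L_edges (Suc k)"
    by (simp_all add: doubleton_in_L_edges_iff L_adj_Nil_iff L_adj_Nil_iff')
  then show ?thesis using assms unfolding L_top_cut_edge_def by (cases "p \<le> card (L_verts k) + 1") auto
qed

definition L_square_top_cut_edge :: "nat \<Rightarrow> nat \<Rightarrow> nat list \<Rightarrow> nat list \<Rightarrow> bool" where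
  "L_square_top_cut_edge n p s t \<longleftrightarrow>
     (p \<le> n + 1 \<longrightarrow> s = [] \<or> t = [0]) \<and>
     (n + 2 \<le> p \<and> p \<le> 2 * n + 2 \<longrightarrow> s = [] \<or> t = [1] \<or> (s = [0] \<and> t = [2])) \<and>
     (p = 2 * n + 3 \<longrightarrow> t = [2] \<or> (s = [] \<and> t = [2,0])) \<and>
     (2 * n + 4 \<le> p \<longrightarrow> s = [2] \<or> (s = [] \<and> t = [2,0]))"

lemma L_square_neighbour_Nil:
  assumes "{[], v} \<in> graph_square (L_verts (Suc k)) (L_edges (Suc k))"
  shows "(\<exists>j\<le>2. v = [j]) \<or> (\<exists>j\<le>2. v = [j,0])"
proof -
  have "[] \<noteq> v" and "L_adj (Suc k) [] v \<or> (\<exists>z. L_adj (Suc k) [] z \<and> L_adj (Suc k) z v)"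
    using assms doubleton_in_L_square_iff by blast+
  then show ?thesis
    using L_adj_Nil_iff L_adj_singleton_iff by metis
qed

lemma L_square_neighbour_singleton:
  assumes i: "i \<le> 2" and e: "{[i], v} \<in> graph_square (L_verts (Suc k)) (L_edges (Suc k))"
  shows "v = [] \<or> (\<exists>j\<le>2. v = [j] \<and> j \<noteq> i) \<or> (\<exists>w\<in>L_verts k. v = i#0#w)"
proof -
  have ne: "[i] \<noteq> v" and "L_adj (Suc k) [i] v \<or> (\<exists>z. L_adj (Suc k) [i] z \<and> L_adj (Suc k) z v)"
    using e doubleton_in_L_square_iff by blast+
  then consider "v = [] \<or> v = [i,0]" | z where "z = [] \<or> z = [i,0]" "L_adj (Suc k) z v"
    using L_adj_singleton_iff[OF i] by blast
  then show ?thesis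
  proof cases
    case (2 z)
    then show ?thesis
    proof (elim disjE)
      assume "z = [i,0]"
      then show ?thesis using 2 ne L_adj_Cons_Cons_iff[OF i, of k "[]" v] L_adjD by auto
    qed (use ne L_adj_Nil_iff in blast)
  qed auto
qed

lemma L_square_top_cut_edge:
  assumes e: "{s,t} \<in> graph_square (L_verts (Suc k)) (L_edges (Suc k))"
    and ls: "L_layout (Suc k) s \<le> p" and lt: "\<not> L_layout (Suc k) t \<le> p"
    and top: "{s,t} \<inter> L_top \<noteq> {}"
  shows "L_square_top_cut_edge (card (L_verts k)) p s t"
proof -
  have n: "0 < card (L_verts k)" by (rule card_L_verts_pos)
  have e': "{t,s} \<in> graph_square (L_verts (Suc k)) (L_edges (Suc k))" using e by (simp add: insert_commute)
  from top have "s = [] \<or> (\<exists>i\<le>2. s = [i]) \<or> t = [] \<or> (\<exists>i\<le>2. t = [i])"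
    unfolding L_top_def by auto
  then show ?thesis
  proof (elim disjE exE conjE)
    assume s: "s = []"
    then have "(\<exists>j\<le>2. t = [j]) \<or> (\<exists>j\<le>2. t = [j,0])" using L_square_neighbour_Nil e by blast
    then show ?thesis using s ls lt n by (auto simp: L_square_top_cut_edge_def nat_le_2_iff copy_offset_def)
  next
    assume t: "t = []"
    then have "(\<exists>j\<le>2. s = [j]) \<or> (\<exists>j\<le>2. s = [j,0])" using L_square_neighbour_Nil e' by blast
    then show ?thesis using t ls lt n by (auto simp: L_square_top_cut_edge_def nat_le_2_iff copy_offset_def)
  next
    fix i assume i: "i \<le> 2" and s: "s = [i]"
    have "t = [] \<or> (\<exists>j\<le>2. t = [j] \<and> j \<noteq> i) \<or> (\<exists>w\<in>L_verts k. t = i#0#w)"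
      using L_square_neighbour_singleton[OF i] e s by blast
    then show ?thesis
    proof (elim disjE bexE)
      fix w assume "w \<in> L_verts k" "t = i#0#w"
      then show ?thesis using L_layout_range[of w k] s ls lt n i
        by (auto simp: L_square_top_cut_edge_def nat_le_2_iff copy_offset_def)
    qed (use s ls lt n i in \<open>auto simp: L_square_top_cut_edge_def nat_le_2_iff\<close>)
  next
    fix i assume i: "i \<le> 2" and t: "t = [i]"
    have "s = [] \<or> (\<exists>j\<le>2. s = [j] \<and> j \<noteq> i) \<or> (\<exists>w\<in>L_verts k. s = i#0#w)"
      using L_square_neighbour_singleton[OF i] e' t by blast
    then show ?thesis
    proof (elim disjE bexE)
      fix w assume "w \<in> L_verts k" "s = i#0#w"
      then show ?thesis using L_layout_range[of w k] t ls lt n i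
        by (auto simp: L_square_top_cut_edge_def nat_le_2_iff copy_offset_def)
    qed (use t ls lt n i in \<open>auto simp: L_square_top_cut_edge_def nat_le_2_iff\<close>)
  qed
qed

lemma L_square_top_cut_edges_linked:
  assumes "L_square_top_cut_edge (card (L_verts k)) p s t" "L_square_top_cut_edge (card (L_verts k)) p s' t'"
    and "s \<noteq> s'" "t \<noteq> t'"
  shows "{s,t'} \<in> graph_square (L_verts (Suc k)) (L_edges (Suc k)) \<or>
    {s',t} \<in> graph_square (L_verts (Suc k)) (L_edges (Suc k))"
proof -
  let ?G = "graph_square (L_verts (Suc k)) (L_edges (Suc k))"
  have root: "L_adj (Suc k) [] [j]" "L_adj (Suc k) [j] []" if "j \<le> 2" for j
    using that by (simp_all add: L_adj_Nil_iff L_adj_Nil_iff')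
  have "L_adj (Suc k) [2] [2,0]" by (simp add: L_adj_singleton_iff)
  then have "{[],[0]} \<in> ?G" "{[],[1]} \<in> ?G" "{[],[2]} \<in> ?G" "{[0],[1]} \<in> ?G" "{[2],[2,0]} \<in> ?G"
    using root[of 0] root[of 1] root[of 2] by (auto simp: doubleton_in_L_square_iff)
  then have edges: "{[],[0]} \<in> ?G" "{[0],[]} \<in> ?G" "{[],[1]} \<in> ?G" "{[1],[]} \<in> ?G"
    "{[],[2]} \<in> ?G" "{[2],[]} \<in> ?G"
    "{[0],[1]} \<in> ?G" "{[1],[0]} \<in> ?G" "{[2],[2,0]} \<in> ?G" "{[2,0],[2]} \<in> ?G"
    by (simp_all add: insert_commute)
  consider "p \<le> card (L_verts k) + 1" | "card (L_verts k) + 2 \<le> p \<and> p \<le> 2 * card (L_verts k) + 2"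
    | "p = 2 * card (L_verts k) + 3" | "2 * card (L_verts k) + 4 \<le> p" by linarith
  then show ?thesis
    by cases (use assms edges in \<open>auto simp: L_square_top_cut_edge_def\<close>)
qed

locale L_family_lmw = L_family_lower + L_family_upper
begin

theorem lmw_eq: "lmw (L_verts k) (G k) = k"
  by (rule lmw_eqI[OF finite_edges linear_layout_L_layout mim_width_L_layout_le mim_width_ge])

end

interpretation L_tree: L_family_lmw L_edges
proof unfold_locales
  show "\<exists>u v. u \<in> L_verts n \<and> v \<in> L_verts n \<and> u \<noteq> v \<and> e = {u,v}" if "e \<in> L_edges n" for e n
    using L_edges_doubleton[OF that] L_adj_neq L_adjD by blast
  show "{[],[0]} \<in> L_edges 1"
    using doubleton_in_L_edges_iff L_adj_Nil_iff[of 0 "[0]"] by simp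
  show "e \<inter> L_top \<noteq> {} \<or> (\<exists>i\<le>2. e \<subseteq> L_copy i k)" if "e \<in> L_edges (Suc k)" for e k
    using L_edges_top_or_copy[OF that] by blast
  show "{s,t'} \<in> L_edges (Suc k) \<or> {s',t} \<in> L_edges (Suc k)"
    if "{s,t} \<in> L_edges (Suc k)" "{s',t'} \<in> L_edges (Suc k)" "{s,t} \<inter> L_top \<noteq> {}" "{s',t'} \<inter> L_top \<noteq> {}"
      "L_layout (Suc k) s \<le> p" "\<not> L_layout (Suc k) t \<le> p" "L_layout (Suc k) s' \<le> p" "\<not> L_layout (Suc k) t' \<le> p"
      "s \<noteq> s'" "t \<noteq> t'" for s t s' t' k p
    using that by (intro L_top_cut_edges_linked L_edges_top_cut_edge)
qed (fact L_edges_copy_iff L_edges_separating_edge)+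

interpretation L_square: L_family_lmw "\<lambda>n. graph_square (L_verts n) (L_edges n)"
proof unfold_locales
  show "\<exists>u v. u \<in> L_verts n \<and> v \<in> L_verts n \<and> u \<noteq> v \<and> e = {u,v}"
    if "e \<in> graph_square (L_verts n) (L_edges n)" for e n
    using L_square_doubleton[OF that] by blast
  show "{[],[0]} \<in> graph_square (L_verts 1) (L_edges 1)"
    using doubleton_in_L_square_iff L_adj_Nil_iff[of 0 "[0]"] by simp
  show "e \<inter> L_top \<noteq> {} \<or> (\<exists>i\<le>2. e \<subseteq> L_copy i k)"
    if "e \<in> graph_square (L_verts (Suc k)) (L_edges (Suc k))" for e k
    using L_square_top_or_copy[OF that] by blast
  show "{s,t'} \<in> graph_square (L_verts (Suc k)) (L_edges (Suc k)) \<or>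
      {s',t} \<in> graph_square (L_verts (Suc k)) (L_edges (Suc k))"
    if "{s,t} \<in> graph_square (L_verts (Suc k)) (L_edges (Suc k))"
      "{s',t'} \<in> graph_square (L_verts (Suc k)) (L_edges (Suc k))" "{s,t} \<inter> L_top \<noteq> {}" "{s',t'} \<inter> L_top \<noteq> {}"
      "L_layout (Suc k) s \<le> p" "\<not> L_layout (Suc k) t \<le> p" "L_layout (Suc k) s' \<le> p" "\<not> L_layout (Suc k) t' \<le> p"
      "s \<noteq> s'" "t \<noteq> t'" for s t s' t' k p
    using that by (intro L_square_top_cut_edges_linked L_square_top_cut_edge)
qed (fact L_square_copy_iff L_square_separating_edge)+

theorem mainTheorem3:
  fixes k :: nat
  shows "lmw (L_verts k) (L_edges k) = k \<and>
         lmw (L_verts k) (graph_square (L_verts k) (L_edges k)) = k"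
  using L_tree.lmw_eq L_square.lmw_eq by simp

end
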